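(* Let $a>1/e$ be a real number. Then, as $t\to+\infty$, $$f(t,a)\sim\left(\frac{2\pi t}{ea}\right)^{1/2}\exp\frac{t}{ea},$$ where $f(t,a)=t\int_{0}^{1}(ax)^{-tx}\,dx$.
   Context: For real $a>0$ and real $t$, $f(t,a)=t\int_0^1 (ax)^{-tx}\,dx$, where $(ax)^{-tx}=\exp(-tx\ln(ax))$ for $x\in(0,1]$ (value $1$ at $x=0$). The notation $g\sim h$ means $g/h\to 1$. *)

theory Defs
  imports "HOL-Analysis.Analysis" "HOL-Library.Landau_Symbols"
begin

definition integrand :: "real \<Rightarrow> real \<Rightarrow> real \<Rightarrow> real" where
  "integrand t a x = (if x = 0 then 1 else exp (- t * x * ln (a * x)))"

definition f :: "real \<Rightarrow> real \<Rightarrow> real" where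
  "f t a = t * integral {0..1} (integrand t a)"

end

theory Submission
  imports Defs "HOL-Probability.Distributions" "HOL-Real_Asymp.Real_Asymp"
begin

(* The substitution y = e a x turns (ax)^(-tx) into exp s * exp (-s H(y)) with s = t/(ea) and
   H(y) = y ln y - y + 1, so that f(t,a) = s e^s \<integral>_0^(ea) exp (-s H(y)) dy.  The function H is
   nonnegative and vanishes only at y = 1, which lies inside [0, ea] because ea > 1, and
   H(y) ~ (y-1)^2/2 there.  Laplace's method thus gives \<integral>_0^(ea) exp (-s H) ~ sqrt (2 pi / s):
   by Taylor's theorem, on a window [1-d, 1+d] the integrand lies between Gaussians of variances
   (1 - d)/s and (1 + d)/s, while outside the window it is exponentially small; then let d -> 0. *)

definition H :: "real \<Rightarrow> real" where
  "H y = y * ln y - y + 1"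

lemma continuous_on_H:
  assumes "0 < b"
  shows "continuous_on {0..b} H"
proof (rule continuous_on_IccI)
  show "(H \<longlongrightarrow> H 0) (at_right 0)"
    unfolding H_def by real_asymp
  show "(H \<longlongrightarrow> H b) (at_left b)"
    unfolding H_def using assms by (intro tendsto_intros) auto
  show "(H \<longlongrightarrow> H x) (at x)" if "0 < x" for x
    unfolding H_def using that by (intro tendsto_intros) auto
qed (use assms in auto)

lemma H_eq_Taylor_remainder:
  assumes "0 < y"
  obtains \<xi> where "min 1 y \<le> \<xi>" "\<xi> \<le> max 1 y" "H y = (y - 1)\<^sup>2 / (2 * \<xi>)"
proof (cases "y = 1")
  case True
  then show ?thesis by (intro that[of 1]) (auto simp: H_def)
next
  case False
  define D :: "nat \<Rightarrow> real \<Rightarrow> real" where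
    "D m = (if m = 0 then H else if m = 1 then ln else inverse)" for m
  have "DERIV (D m) \<xi> :> D (Suc m) \<xi>" if "m < 2" "min 1 y \<le> \<xi>" "\<xi> \<le> max 1 y" for m \<xi>
  proof -
    have "0 < \<xi>" using that assms by linarith
    with \<open>m < 2\<close> show ?thesis
      by (cases m) (auto simp: D_def H_def[abs_def] less_Suc_eq field_simps intro!: derivative_eq_intros)
  qed
  then obtain \<xi> where \<xi>: "if y < 1 then y < \<xi> \<and> \<xi> < 1 else 1 < \<xi> \<and> \<xi> < y"
      "H y = (\<Sum>m<2. D m 1 / fact m * (y - 1) ^ m) + D 2 \<xi> / fact 2 * (y - 1)\<^sup>2"
    using Taylor[of 2 D H "min 1 y" "max 1 y" 1 y] False by (auto simp: D_def)
  have "H y = (y - 1)\<^sup>2 / (2 * \<xi>)"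
    using \<xi>(2) by (simp add: D_def H_def eval_nat_numeral field_simps)
  with \<xi>(1) show ?thesis by (intro that[of \<xi>]) (auto split: if_splits)
qed

lemma H_lower_bound:
  assumes "0 \<le> y"
  shows "(y - 1)\<^sup>2 / (2 * max 1 y) \<le> H y"
proof (cases "y = 0")
  case True
  then show ?thesis by (simp add: H_def)
next
  case False
  with assms obtain \<xi> where "min 1 y \<le> \<xi>" "\<xi> \<le> max 1 y" "H y = (y - 1)\<^sup>2 / (2 * \<xi>)"
    using H_eq_Taylor_remainder by (metis order_le_less)
  moreover have "0 < \<xi>" using \<open>min 1 y \<le> \<xi>\<close> False assms by linarith
  ultimately show ?thesis by (auto intro!: divide_left_mono)
qed

lemma H_upper_bound:
  assumes "0 < y"
  shows "H y \<le> (y - 1)\<^sup>2 / (2 * min 1 y)"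
proof -
  obtain \<xi> where "min 1 y \<le> \<xi>" "\<xi> \<le> max 1 y" "H y = (y - 1)\<^sup>2 / (2 * \<xi>)"
    using H_eq_Taylor_remainder[OF assms] .
  then show ?thesis using assms by (auto intro!: divide_left_mono)
qed

lemma tendsto_integral_Icc_gaussian:
  "((\<lambda>R. integral {-R..R} (\<lambda>x. exp (- x\<^sup>2))) \<longlongrightarrow> sqrt pi) at_top"
proof -
  have "has_bochner_integral lborel (\<lambda>x. indicator {0..} x *\<^sub>R exp (- x\<^sup>2)) (sqrt pi / 2)"
    by (rule gaussian_moment_0)
  then have int: "set_integrable lborel {0..} (\<lambda>x::real. exp (- x\<^sup>2))"
    and val: "(LINT x:{0..}|lborel. exp (- x\<^sup>2)) = sqrt pi / 2"
    by (auto simp: set_integrable_def set_lebesgue_integral_def has_bochner_integral_iff)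
  have half: "((\<lambda>R. integral {0..R} (\<lambda>x. exp (- x\<^sup>2))) \<longlongrightarrow> sqrt pi / 2) at_top"
  proof -
    have "(LINT x:{0..R}|lborel. exp (- x\<^sup>2)) = integral {0..R} (\<lambda>x. exp (- x\<^sup>2))" for R :: real
      by (rule set_borel_integral_eq_integral(2), rule set_integrable_subset[OF int]) auto
    then show ?thesis
      using tendsto_set_lebesgue_integral_at_top[OF _ int] val by simp
  qed
  have "integral {-R..R} (\<lambda>x. exp (- x\<^sup>2)) = 2 * integral {0..R} (\<lambda>x. exp (- x\<^sup>2))"
    if "0 \<le> R" for R :: real
  proof -
    have int_R: "(\<lambda>x. exp (- x\<^sup>2)) integrable_on {-R..R}"
      by (intro integrable_continuous_interval continuous_intros)
    have "((\<lambda>x. exp (- x\<^sup>2)) has_integral integral {0..R} (\<lambda>x. exp (- x\<^sup>2))) {-R..0}"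
      using has_integral_reflect_real[where f="\<lambda>x. exp (- x\<^sup>2)" and a=0 and b=R] int_R that
      by (simp add: integrable_integral integrable_on_subinterval)
    then have "integral {-R..0} (\<lambda>x. exp (- x\<^sup>2)) = integral {0..R} (\<lambda>x. exp (- x\<^sup>2))"
      by (rule integral_unique)
    moreover have "integral {-R..0} (\<lambda>x. exp (- x\<^sup>2)) + integral {0..R} (\<lambda>x. exp (- x\<^sup>2))
        = integral {-R..R} (\<lambda>x. exp (- x\<^sup>2))"
      using that int_R by (intro Henstock_Kurzweil_Integration.integral_combine) auto
    ultimately show ?thesis by simp
  qed
  then have "\<forall>\<^sub>F R :: real in at_top.
      2 * integral {0..R} (\<lambda>x. exp (- x\<^sup>2)) = integral {-R..R} (\<lambda>x. exp (- x\<^sup>2))"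
    by (auto intro: eventually_mono[OF eventually_ge_at_top[of 0]])
  moreover have "((\<lambda>R. 2 * integral {0..R} (\<lambda>x. exp (- x\<^sup>2))) \<longlongrightarrow> sqrt pi) at_top"
    using tendsto_mult_left[OF half, of 2] by simp
  ultimately show ?thesis by (rule Lim_transform_eventually[rotated])
qed

definition gaussian_window :: "real \<Rightarrow> real \<Rightarrow> real \<Rightarrow> real" where
  "gaussian_window c \<delta> k = integral {c - \<delta>..c + \<delta>} (\<lambda>y. exp (- (k * (y - c)\<^sup>2 / 2)))"

lemma gaussian_window_eq:
  assumes "0 < k"
  shows "sqrt k * gaussian_window c \<delta> k
           = sqrt 2 * integral {- (\<delta> * sqrt (k / 2))..\<delta> * sqrt (k / 2)} (\<lambda>x. exp (- x\<^sup>2))"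
proof -
  define m where "m = sqrt (k / 2)"
  have "0 < m" using assms by (simp add: m_def)
  have "(\<lambda>x. exp (- x\<^sup>2)) integrable_on cbox (- (\<delta> * m)) (\<delta> * m)"
    by (intro integrable_continuous continuous_intros)
  from has_integral_affinity'[OF integrable_integral[OF this] \<open>0 < m\<close>, of "- m * c"]
  have "((\<lambda>y. exp (- (m * y - m * c)\<^sup>2)) has_integral
          integral {- (\<delta> * m)..\<delta> * m} (\<lambda>x. exp (- x\<^sup>2)) / m) {c - \<delta>..c + \<delta>}"
    using \<open>0 < m\<close> by (simp add: diff_divide_distrib add_divide_distrib algebra_simps divide_inverse_commute)
  moreover have "(m * y - m * c)\<^sup>2 = k * (y - c)\<^sup>2 / 2" for y
    using assms by (simp add: m_def power_mult_distrib right_diff_distrib[symmetric])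
  ultimately have "gaussian_window c \<delta> k = integral {- (\<delta> * m)..\<delta> * m} (\<lambda>x. exp (- x\<^sup>2)) / m"
    unfolding gaussian_window_def by (simp add: integral_unique)
  moreover have "sqrt k / m = sqrt 2"
    using assms by (simp add: m_def real_sqrt_divide)
  ultimately show ?thesis
    unfolding m_def[symmetric] by (metis times_divide_eq_left times_divide_eq_right)
qed

lemma tendsto_sqrt_mult_gaussian_window:
  assumes "0 < \<delta>"
  shows "((\<lambda>k. sqrt k * gaussian_window c \<delta> k) \<longlongrightarrow> sqrt (2 * pi)) at_top"
proof -
  have "filterlim (\<lambda>k. \<delta> * sqrt (k / 2)) at_top at_top"
    using assms by real_asymp
  from filterlim_compose[OF tendsto_integral_Icc_gaussian this]
  have "((\<lambda>k. sqrt 2 * integral {- (\<delta> * sqrt (k / 2))..\<delta> * sqrt (k / 2)} (\<lambda>x. exp (- x\<^sup>2)))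
          \<longlongrightarrow> sqrt (2 * pi)) at_top"
    using tendsto_mult_left by (fastforce simp: real_sqrt_mult)
  then show ?thesis
    by (rule Lim_transform_eventually)
       (auto simp: gaussian_window_eq intro: eventually_mono[OF eventually_gt_at_top[of 0]])
qed

lemma tendsto_sqrt_mult_rescale:
  assumes "((\<lambda>k. sqrt k * g k) \<longlongrightarrow> L) at_top" and "0 < r"
  shows "((\<lambda>s. sqrt s * g (s / r)) \<longlongrightarrow> sqrt r * L) at_top"
proof -
  have "filterlim (\<lambda>s. s / r) at_top at_top"
    using assms(2) by real_asymp
  from tendsto_mult_left[OF filterlim_compose[OF assms(1) this], of "sqrt r"]
  show ?thesis
    using assms(2) by (simp add: real_sqrt_mult[symmetric] mult.assoc[symmetric])
qed

lemma tendsto_sandwich_approx: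
  fixes g :: "'a \<Rightarrow> real"
  assumes "\<And>e. 0 < e \<Longrightarrow> \<exists>lo up l u. (\<forall>\<^sub>F x in F. lo x \<le> g x \<and> g x \<le> up x) \<and>
             (lo \<longlongrightarrow> l) F \<and> (up \<longlongrightarrow> u) F \<and> L - e < l \<and> u < L + e"
  shows "(g \<longlongrightarrow> L) F"
proof (rule order_tendstoI)
  fix y assume "y < L"
  then obtain lo up l u where "\<forall>\<^sub>F x in F. lo x \<le> g x \<and> g x \<le> up x" "(lo \<longlongrightarrow> l) F" "y < l"
    using assms[of "L - y"] by auto
  then show "\<forall>\<^sub>F x in F. y < g x"
    by (auto dest: order_tendstoD(1) elim: eventually_elim2)
next
  fix y assume "L < y"
  then obtain lo up l u where "\<forall>\<^sub>F x in F. lo x \<le> g x \<and> g x \<le> up x" "(up \<longlongrightarrow> u) F" "u < y"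
    using assms[of "y - L"] by auto
  then show "\<forall>\<^sub>F x in F. g x < y"
    by (auto dest: order_tendstoD(2) elim: eventually_elim2)
qed

lemma integral_exp_H_bounds:
  assumes "0 < \<delta>" "\<delta> < 1" "1 + \<delta> \<le> b" "0 \<le> s"
  shows "gaussian_window 1 \<delta> (s / (1 - \<delta>)) \<le> integral {0..b} (\<lambda>y. exp (- s * H y))"
    and "integral {0..b} (\<lambda>y. exp (- s * H y))
           \<le> b * exp (- s * (\<delta>\<^sup>2 / (2 * b))) + gaussian_window 1 \<delta> (s / (1 + \<delta>))"
proof -
  define W where "W = {1 - \<delta>..1 + \<delta>}"
  define q :: "real \<Rightarrow> real \<Rightarrow> real" where "q k y = exp (- (k * (y - 1)\<^sup>2 / 2))" for k y
  have "W \<subseteq> {0..b}" using assms by (auto simp: W_def)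
  have cont: "continuous_on {0..b} (\<lambda>y. exp (- s * H y))"
    using assms by (intro continuous_intros continuous_on_H) auto
  then have int: "(\<lambda>y. exp (- s * H y)) integrable_on {0..b}"
    by (rule integrable_continuous_interval)
  have int_W: "(\<lambda>y. exp (- s * H y)) integrable_on W"
    using int \<open>W \<subseteq> {0..b}\<close> unfolding W_def by (rule integrable_on_subinterval)
  have int_q: "q k integrable_on W" for k
    unfolding q_def W_def by (intro integrable_continuous_interval continuous_intros) simp
  have window: "gaussian_window 1 \<delta> k = integral W (q k)" for k
    by (simp add: gaussian_window_def W_def q_def[abs_def])
  have "integral W (q (s / (1 - \<delta>))) \<le> integral W (\<lambda>y. exp (- s * H y))"
  proof (rule integral_le[OF int_q int_W])
    fix y assume "y \<in> W"
    then have "0 < 1 - \<delta>" "1 - \<delta> \<le> min 1 y" using assms by (auto simp: W_def)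
    then have "H y \<le> (y - 1)\<^sup>2 / (2 * min 1 y)" by (intro H_upper_bound) auto
    also have "\<dots> \<le> (y - 1)\<^sup>2 / (2 * (1 - \<delta>))"
      using \<open>0 < 1 - \<delta>\<close> \<open>1 - \<delta> \<le> min 1 y\<close> by (intro divide_left_mono) auto
    finally have "s * H y \<le> s * ((y - 1)\<^sup>2 / (2 * (1 - \<delta>)))"
      using \<open>0 \<le> s\<close> by (rule mult_left_mono)
    then show "q (s / (1 - \<delta>)) y \<le> exp (- s * H y)" by (simp add: q_def mult.commute)
  qed
  also have "\<dots> \<le> integral {0..b} (\<lambda>y. exp (- s * H y))"
    using \<open>W \<subseteq> {0..b}\<close> int int_W by (intro integral_subset_le) auto
  finally show "gaussian_window 1 \<delta> (s / (1 - \<delta>)) \<le> integral {0..b} (\<lambda>y. exp (- s * H y))"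
    by (simp add: window)
  let ?far = "exp (- s * (\<delta>\<^sup>2 / (2 * b)))"
  have "integral {0..b} (\<lambda>y. exp (- s * H y))
          \<le> integral {0..b} (\<lambda>y. ?far + (if y \<in> W then q (s / (1 + \<delta>)) y else 0))"
  proof (rule integral_le[OF int])
    show "(\<lambda>y. ?far + (if y \<in> W then q (s / (1 + \<delta>)) y else 0)) integrable_on {0..b}"
      using int_q \<open>W \<subseteq> {0..b}\<close>
      by (intro integrable_add integrable_const_ivl) (simp add: integrable_restrict_Int Int_absorb2)
    fix y assume y: "y \<in> {0..b}"
    have lower: "(y - 1)\<^sup>2 / (2 * max 1 y) \<le> H y"
      using y by (intro H_lower_bound) auto
    show "exp (- s * H y) \<le> ?far + (if y \<in> W then q (s / (1 + \<delta>)) y else 0)"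
    proof (cases "y \<in> W")
      case True
      then have "max 1 y \<le> 1 + \<delta>" by (auto simp: W_def)
      then have "(y - 1)\<^sup>2 / (2 * (1 + \<delta>)) \<le> (y - 1)\<^sup>2 / (2 * max 1 y)"
        by (intro divide_left_mono) auto
      also note lower
      finally have "s * ((y - 1)\<^sup>2 / (2 * (1 + \<delta>))) \<le> s * H y"
        using \<open>0 \<le> s\<close> by (rule mult_left_mono)
      then have "exp (- s * H y) \<le> q (s / (1 + \<delta>)) y" by (simp add: q_def mult.commute)
      with True show ?thesis by (simp add: add_increasing)
    next
      case False
      then have "\<delta>\<^sup>2 \<le> (y - 1)\<^sup>2"
        using assms by (auto simp: W_def abs_le_square_iff[symmetric])
      moreover have "max 1 y \<le> b" using y assms by auto
      ultimately have "\<delta>\<^sup>2 / (2 * b) \<le> (y - 1)\<^sup>2 / (2 * max 1 y)"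
        by (intro frac_le) auto
      also note lower
      finally have "s * (\<delta>\<^sup>2 / (2 * b)) \<le> s * H y"
        using \<open>0 \<le> s\<close> by (rule mult_left_mono)
      with False show ?thesis by simp
    qed
  qed
  also have "\<dots> = b * ?far + gaussian_window 1 \<delta> (s / (1 + \<delta>))"
    using int_q \<open>W \<subseteq> {0..b}\<close> assms
    by (subst integral_add) (auto simp: integrable_restrict_Int Int_absorb2 window
          Henstock_Kurzweil_Integration.integral_restrict_Int)
  finally show "integral {0..b} (\<lambda>y. exp (- s * H y)) \<le> b * ?far + gaussian_window 1 \<delta> (s / (1 + \<delta>))" .
qed

lemma tendsto_sqrt_mult_integral_exp_H:
  assumes "1 < b"
  shows "((\<lambda>s. sqrt s * integral {0..b} (\<lambda>y. exp (- s * H y))) \<longlongrightarrow> sqrt (2 * pi)) at_top"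
proof (rule tendsto_sandwich_approx)
  fix e :: real assume "0 < e"
  let ?P = "sqrt (2 * pi)" and ?K = "\<lambda>s. integral {0..b} (\<lambda>y. exp (- s * H y))"
  have "\<forall>\<^sub>F \<delta> in at_right 0. 0 < \<delta> \<and> \<delta> < min 1 (b - 1) \<and>
          ?P - e < sqrt (1 - \<delta>) * ?P \<and> sqrt (1 + \<delta>) * ?P < ?P + e"
  proof (intro eventually_conj)
    have "((\<lambda>\<delta>. sqrt (1 - \<delta>) * ?P) \<longlongrightarrow> ?P) (at_right 0)"
         "((\<lambda>\<delta>. sqrt (1 + \<delta>) * ?P) \<longlongrightarrow> ?P) (at_right 0)"
      by (auto intro!: tendsto_eq_intros)
    with \<open>0 < e\<close> show "\<forall>\<^sub>F \<delta> in at_right 0. ?P - e < sqrt (1 - \<delta>) * ?P"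
      "\<forall>\<^sub>F \<delta> in at_right 0. sqrt (1 + \<delta>) * ?P < ?P + e"
      by (simp_all add: order_tendstoD)
    show "\<forall>\<^sub>F \<delta> in at_right 0. \<delta> < min 1 (b - 1)"
      using assms by (intro order_tendstoD(2)[OF tendsto_ident_at]) simp
  qed (rule eventually_at_right_less)
  then obtain \<delta> where \<delta>: "0 < \<delta>" "\<delta> < min 1 (b - 1)"
      "?P - e < sqrt (1 - \<delta>) * ?P" "sqrt (1 + \<delta>) * ?P < ?P + e"
    using eventually_happens'[OF trivial_limit_at_right_real] by blast
  then have "\<delta> < 1" "1 + \<delta> \<le> b" by auto
  define c where "c = \<delta>\<^sup>2 / (2 * b)"
  define lo where "lo s = sqrt s * gaussian_window 1 \<delta> (s / (1 - \<delta>))" for s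
  define up where "up s = sqrt s * (b * exp (- s * c)) + sqrt s * gaussian_window 1 \<delta> (s / (1 + \<delta>))"
    for s
  have "\<forall>\<^sub>F s in at_top. lo s \<le> sqrt s * ?K s \<and> sqrt s * ?K s \<le> up s"
    using eventually_ge_at_top[of 0]
  proof eventually_elim
    case (elim s)
    from integral_exp_H_bounds[OF \<open>0 < \<delta>\<close> \<open>\<delta> < 1\<close> \<open>1 + \<delta> \<le> b\<close> elim]
    show ?case
      unfolding lo_def up_def c_def distrib_left[symmetric]
      by (intro conjI mult_left_mono) (use elim in auto)
  qed
  moreover have "(lo \<longlongrightarrow> sqrt (1 - \<delta>) * ?P) at_top"
    unfolding lo_def using \<open>0 < \<delta>\<close> \<open>\<delta> < 1\<close>
    by (intro tendsto_sqrt_mult_rescale tendsto_sqrt_mult_gaussian_window) auto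
  moreover have "(up \<longlongrightarrow> sqrt (1 + \<delta>) * ?P) at_top"
  proof -
    have "0 < c" using \<delta> assms by (simp add: c_def)
    then have "((\<lambda>s. sqrt s * (b * exp (- s * c))) \<longlongrightarrow> 0) at_top" by real_asymp
    with \<open>0 < \<delta>\<close> have "(up \<longlongrightarrow> 0 + sqrt (1 + \<delta>) * ?P) at_top"
      unfolding up_def
      by (intro tendsto_add tendsto_sqrt_mult_rescale tendsto_sqrt_mult_gaussian_window) auto
    then show ?thesis by simp
  qed
  ultimately show "\<exists>lo up l u. (\<forall>\<^sub>F s in at_top. lo s \<le> sqrt s * ?K s \<and> sqrt s * ?K s \<le> up s) \<and>
      (lo \<longlongrightarrow> l) at_top \<and> (up \<longlongrightarrow> u) at_top \<and> ?P - e < l \<and> u < ?P + e"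
    using \<delta>(3,4) by blast
qed

lemma f_eq_integral_exp_H:
  assumes "0 < a"
  defines "b \<equiv> exp 1 * a"
  shows "f t a = t / b * exp (t / b) * integral {0..b} (\<lambda>y. exp (- (t / b) * H y))"
proof -
  define s where "s = t / b"
  have "0 < b" using assms by (simp add: b_def)
  then have "t = s * b" by (simp add: s_def)
  have integrand_eq: "integrand t a x = exp s * exp (- s * H (b * x))" if "0 \<le> x" for x
  proof (cases "x = 0")
    case True
    then show ?thesis by (simp add: integrand_def H_def flip: exp_add)
  next
    case False
    with that assms have "ln (b * x) = 1 + ln (a * x)"
      by (simp add: b_def ln_mult mult.assoc)
    then have "s + - s * H (b * x) = - t * x * ln (a * x)"
      unfolding H_def \<open>t = s * b\<close> by (simp add: algebra_simps)
    with False show ?thesis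
      by (simp add: integrand_def flip: exp_add)
  qed
  have "(\<lambda>y. exp (- s * H y)) integrable_on {0..b}"
    using \<open>0 < b\<close> by (intro integrable_continuous_interval continuous_intros continuous_on_H)
  from has_integral_affinity'[OF integrable_integral[OF this[folded box_real(2)]] \<open>0 < b\<close>, of 0]
  have "((\<lambda>x. exp (- s * H (b * x))) has_integral integral {0..b} (\<lambda>y. exp (- s * H y)) / b) {0..1}"
    using \<open>0 < b\<close> by (simp add: divide_inverse_commute)
  then have "(integrand t a has_integral exp s * (integral {0..b} (\<lambda>y. exp (- s * H y)) / b)) {0..1}"
    by (rule has_integral_eq[OF _ has_integral_mult_right, rotated]) (simp add: integrand_eq)
  then show ?thesis
    unfolding f_def s_def by (simp add: integral_unique)
qed

theorem mainTheorem2: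
  fixes a :: real
  assumes "a > 1 / exp 1"
  shows "(\<lambda>t. f t a) \<sim>[at_top]
           (\<lambda>t. sqrt (2 * pi * t / (exp 1 * a)) * exp (t / (exp 1 * a)))"
proof -
  define b where "b = exp 1 * a"
  have "0 < a" using assms by (smt (verit) divide_pos_pos exp_gt_zero)
  have "1 < b" using assms by (simp add: b_def divide_less_eq mult.commute)
  define K where "K s = integral {0..b} (\<lambda>y. exp (- s * H y))" for s
  have "(\<lambda>s. sqrt s * K s) \<sim>[at_top] (\<lambda>_. sqrt (2 * pi))"
    unfolding K_def using \<open>1 < b\<close>
    by (intro tendsto_imp_asymp_equiv_const tendsto_sqrt_mult_integral_exp_H) auto
  then have "(\<lambda>s. sqrt s * K s * (sqrt s * exp s)) \<sim>[at_top] (\<lambda>s. sqrt (2 * pi) * (sqrt s * exp s))"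
    by (intro asymp_equiv_mult asymp_equiv_refl)
  moreover have "filterlim (\<lambda>t. t / b) at_top at_top"
    using \<open>1 < b\<close> by real_asymp
  ultimately have "(\<lambda>t. sqrt (t / b) * K (t / b) * (sqrt (t / b) * exp (t / b)))
                     \<sim>[at_top] (\<lambda>t. sqrt (2 * pi) * (sqrt (t / b) * exp (t / b)))"
    by (rule asymp_equiv_compose')
  then show ?thesis
  proof (rule asymp_equiv_transfer)
    show "\<forall>\<^sub>F t in at_top. sqrt (t / b) * K (t / b) * (sqrt (t / b) * exp (t / b)) = f t a"
      using eventually_ge_at_top[of 0]
    proof eventually_elim
      case (elim t)
      with \<open>1 < b\<close> have "sqrt (t / b) * sqrt (t / b) = t / b" by simp
      then show ?case
        unfolding f_eq_integral_exp_H[OF \<open>0 < a\<close>] b_def[symmetric] K_def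
        by (metis mult.assoc mult.commute)
    qed
    show "\<forall>\<^sub>F t in at_top. sqrt (2 * pi) * (sqrt (t / b) * exp (t / b))
            = sqrt (2 * pi * t / (exp 1 * a)) * exp (t / (exp 1 * a))"
      by (simp add: b_def mult.assoc[symmetric] flip: real_sqrt_mult)
  qed
qed

end
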